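(* Consider a hierarchical tensor factorization with mode tree $\mathcal T$ whose weight matrices evolve under gradient flow on $\phi_H$ for $t\ge0$. For any $\nu\in\mathrm{int}(\mathcal T)$, $\nu_c\in C(\nu)$ and $r\in[R_\nu]$: $$\frac{d}{dt}\|W^{(\nu)}_{r,:}(t)\|^2=2\sigma_{\nu,r}(t)\big\langle-\nabla\mathcal L_H(\mathcal W_H(t)),\mathcal E_{\nu,r}(t)\big\rangle=\frac{d}{dt}\|W^{(\nu_c)}_{:,r}(t)\|^2.$$
   Context: Fix $N\in\mathbb N$, $D_1,\dots,D_N\in\mathbb N$; $[K]:=\{1,\dots,K\}$; norms are Frobenius norms, $\langle\cdot,\cdot\rangle$ the entrywise inner product, $\otimes$ the tensor product. A mode tree $\mathcal T$ over $[N]$ is a rooted tree whose nodes are labeled by subsets of $[N]$, with exactly $N$ leaves labeled $\{1\},\dots,\{N\}$, and where each interior node's label is the union of its children's labels; nodes are identified with labels, root $[N]$, $\mathrm{int}(\mathcal T)$ interior nodes, $Pa(\nu)$ parent, $C(\nu)$ children (fixed order). A hierarchical tensor factorization has $R_\nu\in\mathbb N$ ($\nu\in\mathrm{int}(\mathcal T)$), $R_{Pa([N])}:=1$, $R_{\{n\}}:=D_n$, weight matrices $W^{(\nu)}\in\mathbb R^{R_\nu\times R_{Pa(\nu)}}$. Intermediate tensors: $\mathcal W^{(\{n\},r)}:=W^{(\{n\})}_{:,r}$; for $\nu\in\mathrm{int}(\mathcal T)\setminus\{[N]\}$ (leaves to root), $r\in[R_{Pa(\nu)}]$: $\mathcal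 W^{(\nu,r)}:=\pi_\nu\big(\sum_{r'=1}^{R_\nu}W^{(\nu)}_{r',r}\bigotimes_{\nu_c\in C(\nu)}\mathcal W^{(\nu_c,r')}\big)$; end tensor $\mathcal W_H:=\pi_{[N]}\big(\sum_{r'=1}^{R_{[N]}}W^{([N])}_{r',1}\bigotimes_{\nu_c\in C([N])}\mathcal W^{(\nu_c,r')}\big)$, where $\pi_\nu$ permutes modes (ordered by children, each child's elements ascending) into ascending order of the elements of $\nu$. $\sigma_{\nu,r}:=\|W^{(\nu)}_{r,:}\|\prod_{\nu_c\in C(\nu)}\|W^{(\nu_c)}_{:,r}\|$. $\mathcal E_{\nu,r}$ is the end tensor obtained from the same construction except that, for every $r'\in[R_{Pa(\nu)}]$, the tensor produced at node $\nu$ (the end tensor itself if $\nu=[N]$) is replaced by $\pi_\nu\big(\sigma_{\nu,r}^{-1}W^{(\nu)}_{r,r'}\bigotimes_{\nu_c\in C(\nu)}\mathcal W^{(\nu_c,r)}\big)$; $\mathcal E_{\nu,r}:=0$ if $\sigma_{\nu,r}=0$. $\mathcal L_H:\mathbb R^{D_1\times\cdots\times D_N}\to\mathbb R_{\ge0}$ is differentiable and locally smooth, $\phi_H((W^{(\nu)})_\nu):=\mathcal L_H(\mathcal W_H)$, gradient flow: $\frac{d}{dt}W^{(\nu)}(t)=-\frac{\partial}{\partial W^{(\nu)}}\phi_H((W^{(\nu')}(t))_{\nu'})$ for all $\nu\in\mathcal T$, $t\ge0$; time-$t$ quantities are computed from the weights at time $t$. *)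

theory Defs
  imports "HOL-Analysis.Analysis" "HOL-Analysis.Finite_Function_Topology"
begin

text \<open>Modes are 1..N.  A node of the mode tree is identified with its
label (a subset of {1..N}); T is the set of nodes, C the children map.
Weights: W nu i j is the (i,j) entry of the matrix W^(nu) (1-based indices).
An index tuple (i_1,...,i_N) of a tensor in R^(D_1 x ... x D_N) is represented
by the function a with a n = i_n for n in {1..N} and a n = 0 otherwise;
tensors are finitely supported maps from such index functions to reals.\<close>

definition mode_tree :: "nat \<Rightarrow> nat set set \<Rightarrow> (nat set \<Rightarrow> nat set set) \<Rightarrow> bool" where
  "mode_tree N T C \<longleftrightarrow>
     {1..N} \<in> T \<and>
     (\<forall>\<nu>\<in>T. \<nu> \<subseteq> {1..N} \<and> C \<nu> \<subseteq> T \<and> (\<forall>c\<in>C \<nu>. c \<subset> \<nu>)) \<and>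
     {\<nu>\<in>T. C \<nu> = {}} = (\<lambda>n. {n}) ` {1..N} \<and>
     (\<forall>\<nu>\<in>T. C \<nu> \<noteq> {} \<longrightarrow> \<Union>(C \<nu>) = \<nu>) \<and>
     (\<forall>\<nu>\<in>T. \<nu> \<noteq> {1..N} \<longrightarrow> (\<exists>!p. p \<in> T \<and> \<nu> \<in> C p))"

definition interior :: "nat set set \<Rightarrow> (nat set \<Rightarrow> nat set set) \<Rightarrow> nat set set" where
  "interior T C = {\<nu>\<in>T. C \<nu> \<noteq> {}}"

definition parent :: "nat set set \<Rightarrow> (nat set \<Rightarrow> nat set set) \<Rightarrow> nat set \<Rightarrow> nat set" where
  "parent T C \<nu> = (THE p. p \<in> T \<and> \<nu> \<in> C p)"

definition rk :: "(nat set \<Rightarrow> nat set set) \<Rightarrow> (nat \<Rightarrow> nat) \<Rightarrow> (nat set \<Rightarrow> nat) \<Rightarrow> nat set \<Rightarrow> nat" where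
  "rk C D R \<nu> = (if C \<nu> = {} then D (the_elem \<nu>) else R \<nu>)"

definition rkpa :: "nat \<Rightarrow> nat set set \<Rightarrow> (nat set \<Rightarrow> nat set set) \<Rightarrow> (nat \<Rightarrow> nat) \<Rightarrow> (nat set \<Rightarrow> nat) \<Rightarrow> nat set \<Rightarrow> nat" where
  "rkpa N T C D R \<nu> = (if \<nu> = {1..N} then 1 else rk C D R (parent T C \<nu>))"

text \<open>Intermediate tensors W^(nu,r), evaluated at an index assignment a of the modes of nu.
  The optional modifier (nu0, r0, c) replaces, at node nu0 only, the tensor produced
  there (for every column r) by  c * W^(nu0)_{r0,r} * tensor product of the W^(nu_c,r0).
  The first argument is recursion fuel (we use card nu, children have smaller labels).\<close>
fun htens :: "nat \<Rightarrow> (nat set \<Rightarrow> nat set set) \<Rightarrow> (nat set \<Rightarrow> nat) \<Rightarrow>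
    (nat set \<Rightarrow> nat \<Rightarrow> nat \<Rightarrow> real) \<Rightarrow> (nat set \<times> nat \<times> real) option \<Rightarrow>
    nat set \<Rightarrow> nat \<Rightarrow> (nat \<Rightarrow> nat) \<Rightarrow> real" where
  "htens 0 C rkf W m \<nu> r a = 0"
| "htens (Suc k) C rkf W m \<nu> r a =
     (if C \<nu> = {} then W \<nu> (a (the_elem \<nu>)) r
      else (case m of
              Some (\<nu>0, r0, c) \<Rightarrow>
                 if \<nu> = \<nu>0 then c * W \<nu> r0 r * (\<Prod>\<nu>c\<in>C \<nu>. htens k C rkf W m \<nu>c r0 a)
                 else (\<Sum>r'\<in>{1..rkf \<nu>}. W \<nu> r' r * (\<Prod>\<nu>c\<in>C \<nu>. htens k C rkf W m \<nu>c r' a))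
            | None \<Rightarrow> (\<Sum>r'\<in>{1..rkf \<nu>}. W \<nu> r' r * (\<Prod>\<nu>c\<in>C \<nu>. htens k C rkf W m \<nu>c r' a))))"

definition tbox :: "nat \<Rightarrow> (nat \<Rightarrow> nat) \<Rightarrow> (nat \<Rightarrow> nat) set" where
  "tbox N D = {a. (\<forall>n\<in>{1..N}. a n \<in> {1..D n}) \<and> (\<forall>n. n \<notin> {1..N} \<longrightarrow> a n = 0)}"

definition tspace :: "nat \<Rightarrow> (nat \<Rightarrow> nat) \<Rightarrow> ((nat \<Rightarrow> nat) \<Rightarrow>\<^sub>0 real) set" where
  "tspace N D = {X. Poly_Mapping.keys X \<subseteq> tbox N D}"

definition to_tensor :: "nat \<Rightarrow> (nat \<Rightarrow> nat) \<Rightarrow> ((nat \<Rightarrow> nat) \<Rightarrow> real) \<Rightarrow> ((nat \<Rightarrow> nat) \<Rightarrow>\<^sub>0 real)" where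
  "to_tensor N D f = Abs_poly_mapping (\<lambda>a. if a \<in> tbox N D then f a else 0)"

definition end_tensor_mod :: "nat \<Rightarrow> (nat \<Rightarrow> nat) \<Rightarrow> nat set set \<Rightarrow> (nat set \<Rightarrow> nat set set) \<Rightarrow>
    (nat set \<Rightarrow> nat) \<Rightarrow> (nat set \<Rightarrow> nat \<Rightarrow> nat \<Rightarrow> real) \<Rightarrow> (nat set \<times> nat \<times> real) option \<Rightarrow>
    ((nat \<Rightarrow> nat) \<Rightarrow>\<^sub>0 real)" where
  "end_tensor_mod N D T C R W m =
     to_tensor N D (htens (card {1..N}) C (rk C D R) W m {1..N} 1)"

definition end_tensor where
  "end_tensor N D T C R W = end_tensor_mod N D T C R W None"

definition row_norm :: "nat \<Rightarrow> nat set set \<Rightarrow> (nat set \<Rightarrow> nat set set) \<Rightarrow> (nat \<Rightarrow> nat) \<Rightarrow>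
    (nat set \<Rightarrow> nat) \<Rightarrow> (nat set \<Rightarrow> nat \<Rightarrow> nat \<Rightarrow> real) \<Rightarrow> nat set \<Rightarrow> nat \<Rightarrow> real" where
  "row_norm N T C D R W \<nu> r = sqrt (\<Sum>j\<in>{1..rkpa N T C D R \<nu>}. (W \<nu> r j)\<^sup>2)"

definition col_norm :: "(nat set \<Rightarrow> nat set set) \<Rightarrow> (nat \<Rightarrow> nat) \<Rightarrow>
    (nat set \<Rightarrow> nat) \<Rightarrow> (nat set \<Rightarrow> nat \<Rightarrow> nat \<Rightarrow> real) \<Rightarrow> nat set \<Rightarrow> nat \<Rightarrow> real" where
  "col_norm C D R W \<nu> r = sqrt (\<Sum>i\<in>{1..rk C D R \<nu>}. (W \<nu> i r)\<^sup>2)"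

definition sigma :: "nat \<Rightarrow> nat set set \<Rightarrow> (nat set \<Rightarrow> nat set set) \<Rightarrow> (nat \<Rightarrow> nat) \<Rightarrow>
    (nat set \<Rightarrow> nat) \<Rightarrow> (nat set \<Rightarrow> nat \<Rightarrow> nat \<Rightarrow> real) \<Rightarrow> nat set \<Rightarrow> nat \<Rightarrow> real" where
  "sigma N T C D R W \<nu> r =
     row_norm N T C D R W \<nu> r * (\<Prod>\<nu>c\<in>C \<nu>. col_norm C D R W \<nu>c r)"

definition E_tensor :: "nat \<Rightarrow> (nat \<Rightarrow> nat) \<Rightarrow> nat set set \<Rightarrow> (nat set \<Rightarrow> nat set set) \<Rightarrow>
    (nat set \<Rightarrow> nat) \<Rightarrow> (nat set \<Rightarrow> nat \<Rightarrow> nat \<Rightarrow> real) \<Rightarrow> nat set \<Rightarrow> nat \<Rightarrow> ((nat \<Rightarrow> nat) \<Rightarrow>\<^sub>0 real)" where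
  "E_tensor N D T C R W \<nu> r =
     (let s = sigma N T C D R W \<nu> r in
      if s = 0 then 0 else end_tensor_mod N D T C R W (Some (\<nu>, r, 1 / s)))"

definition tinner :: "nat \<Rightarrow> (nat \<Rightarrow> nat) \<Rightarrow> ((nat \<Rightarrow> nat) \<Rightarrow>\<^sub>0 real) \<Rightarrow> ((nat \<Rightarrow> nat) \<Rightarrow>\<^sub>0 real) \<Rightarrow> real" where
  "tinner N D X Y = (\<Sum>a\<in>tbox N D. Poly_Mapping.lookup X a * Poly_Mapping.lookup Y a)"

definition tgrad :: "nat \<Rightarrow> (nat \<Rightarrow> nat) \<Rightarrow> (((nat \<Rightarrow> nat) \<Rightarrow>\<^sub>0 real) \<Rightarrow> real) \<Rightarrow>
    ((nat \<Rightarrow> nat) \<Rightarrow>\<^sub>0 real) \<Rightarrow> ((nat \<Rightarrow> nat) \<Rightarrow>\<^sub>0 real)" where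
  "tgrad N D L X = to_tensor N D (\<lambda>a. deriv (\<lambda>s. L (X + Poly_Mapping.single a s)) 0)"

definition loss_ok :: "nat \<Rightarrow> (nat \<Rightarrow> nat) \<Rightarrow> (((nat \<Rightarrow> nat) \<Rightarrow>\<^sub>0 real) \<Rightarrow> real) \<Rightarrow> bool" where
  "loss_ok N D L \<longleftrightarrow>
     (\<forall>X\<in>tspace N D. L X \<ge> 0) \<and>
     (\<forall>X\<in>tspace N D. L differentiable (at X within tspace N D)) \<and>
     (\<forall>X\<in>tspace N D. \<exists>e>0. \<exists>K. \<forall>Y\<in>tspace N D. \<forall>Z\<in>tspace N D.
         dist Y X < e \<longrightarrow> dist Z X < e \<longrightarrow>
         norm (tgrad N D L Y - tgrad N D L Z) \<le> K * norm (Y - Z))"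

definition phiH where
  "phiH N D T C R L W = L (end_tensor N D T C R W)"

definition upd_w :: "(nat set \<Rightarrow> nat \<Rightarrow> nat \<Rightarrow> real) \<Rightarrow> nat set \<Rightarrow> nat \<Rightarrow> nat \<Rightarrow> real \<Rightarrow>
    (nat set \<Rightarrow> nat \<Rightarrow> nat \<Rightarrow> real)" where
  "upd_w W \<nu> i j s = W(\<nu> := (W \<nu>)(i := (W \<nu> i)(j := s)))"

definition partial_phi where
  "partial_phi N D T C R L W \<nu> i j = deriv (\<lambda>s. phiH N D T C R L (upd_w W \<nu> i j s)) (W \<nu> i j)"

definition grad_flow where
  "grad_flow N D T C R L Wt \<longleftrightarrow>
     (\<forall>t\<ge>0. \<forall>\<nu>\<in>T. \<forall>i\<in>{1..rk C D R \<nu>}. \<forall>j\<in>{1..rkpa N T C D R \<nu>}.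
        ((\<lambda>\<tau>. Wt \<tau> \<nu> i j) has_real_derivative (- partial_phi N D T C R L (Wt t) \<nu> i j))
          (at t within {0..}))"

end

theory Submission
  imports Defs
begin

text \<open>Write L' for the derivative of the loss at the current end tensor. The end tensor is
linear in each weight matrix \<open>W\<^sup>(\<mu>)\<close> separately, so the partial derivative of \<open>\<phi>\<^sub>H\<close> in
the entry (i, j) of \<open>W\<^sup>(\<mu>)\<close> is L' applied to the end tensor in which \<open>W\<^sup>(\<mu>)\<close> is
replaced by the matrix unit \<open>e\<^sub>i\<^sub>j\<close>. Summing over a set S of entries, along the gradient
flow the derivative of the sum of their squares is -2 times L' applied to the end tensor in
which \<open>W\<^sup>(\<mu>)\<close> is masked to S.

For row r of \<open>W\<^sup>(\<nu>)\<close> and column r of the child matrix \<open>W\<^sup>(\<nu>\<^sub>c\<^sup>)\<close> these masked end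
tensors coincide: column r of the child enters node \<open>\<nu>\<close> only through the r-th summand,
which is exactly what row r of \<open>W\<^sup>(\<nu>)\<close> selects. The common tensor is
\<open>\<sigma>\<^sub>\<nu>\<^sub>,\<^sub>r E\<^sub>\<nu>\<^sub>,\<^sub>r\<close>; when \<open>\<sigma>\<^sub>\<nu>\<^sub>,\<^sub>r = 0\<close> a row or a column vanishes and both sides are 0.
Finally, the inner product of the negative gradient with a tensor Y is -L' Y.\<close>

section \<open>Hierarchical contraction\<close>


definition child_rel :: "(nat set \<Rightarrow> nat set set) \<Rightarrow> nat set rel" where
  "child_rel C = {(p, c). c \<in> C p}"

lemma child_relI: "c \<in> C p \<Longrightarrow> (p, c) \<in> child_rel C"
  by (simp add: child_rel_def)

lemma prod_remove_cong:
  assumes "finite A" "x \<in> A" "\<And>y. y \<in> A - {x} \<Longrightarrow> f y = g y"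
  shows "prod f A = f x * prod g (A - {x})"
proof -
  have "prod f (A - {x}) = prod g (A - {x})"
    using assms(3) by (rule prod.cong[OF refl])
  then show ?thesis
    using prod.remove[OF assms(1,2), of f] by simp
qed

lemma htens_cong_subtree:
  assumes "\<And>\<nu>. (\<mu>, \<nu>) \<in> (child_rel C)\<^sup>* \<Longrightarrow> W' \<nu> = W \<nu>"
  shows "htens k C rkf W' m \<mu> q a = htens k C rkf W m \<mu> q a"
  using assms
proof (induction k arbitrary: \<mu> q)
  case (Suc k)
  have "htens k C rkf W' m c r' a = htens k C rkf W m c r' a" if "c \<in> C \<mu>" for c r'
    using Suc.IH Suc.prems that by (meson child_relI converse_rtrancl_into_rtrancl)
  then have "(\<Prod>c\<in>C \<mu>. htens k C rkf W' m c r' a) = (\<Prod>c\<in>C \<mu>. htens k C rkf W m c r' a)" for r'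
    by (simp cong: prod.cong)
  moreover have "W' \<mu> = W \<mu>"
    using Suc.prems by blast
  ultimately show ?case
    by (simp only: htens.simps)
qed simp

lemma htens_Suc_None:
  "C \<mu> \<noteq> {} \<Longrightarrow> htens (Suc k) C rkf W None \<mu> q a =
    (\<Sum>r'\<in>{1..rkf \<mu>}. W \<mu> r' q * (\<Prod>c\<in>C \<mu>. htens k C rkf W None c r' a))"
  by simp

definition mask_entries :: "(nat \<Rightarrow> nat \<Rightarrow> real) \<Rightarrow> (nat \<times> nat) set \<Rightarrow> nat \<Rightarrow> nat \<Rightarrow> real" where
  "mask_entries M S i j = (if (i, j) \<in> S then M i j else 0)"

definition matrix_unit :: "nat \<Rightarrow> nat \<Rightarrow> nat \<Rightarrow> nat \<Rightarrow> real" where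
  "matrix_unit i j i' j' = (if (i', j') = (i, j) then 1 else 0)"

lemma htens_Some_eq_None:
  assumes "C \<nu> \<noteq> {}" "r \<in> {1..rkf \<nu>}"
  shows "htens k C rkf W (Some (\<nu>, r, c)) \<mu> q a =
    htens k C rkf (W(\<nu> := \<lambda>i j. c * mask_entries (W \<nu>) ({r} \<times> UNIV) i j)) None \<mu> q a"
proof (induction k arbitrary: \<mu> q)
  case (Suc k)
  let ?W' = "W(\<nu> := \<lambda>i j. c * mask_entries (W \<nu>) ({r} \<times> UNIV) i j)"
  show ?case
  proof (cases "\<mu> = \<nu>")
    case True
    have "htens (Suc k) C rkf W (Some (\<nu>, r, c)) \<mu> q a =
        c * W \<nu> r q * (\<Prod>\<nu>c\<in>C \<nu>. htens k C rkf W (Some (\<nu>, r, c)) \<nu>c r a)"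
      using True assms(1) by simp
    also have "\<dots> = c * W \<nu> r q * (\<Prod>\<nu>c\<in>C \<nu>. htens k C rkf ?W' None \<nu>c r a)"
      by (simp only: Suc.IH)
    also have "\<dots> = (\<Sum>r'\<in>{1..rkf \<nu>}.
        if r' = r then c * W \<nu> r q * (\<Prod>\<nu>c\<in>C \<nu>. htens k C rkf ?W' None \<nu>c r a) else 0)"
      using assms(2) by simp
    also have "\<dots> = (\<Sum>r'\<in>{1..rkf \<nu>}. c * mask_entries (W \<nu>) ({r} \<times> UNIV) r' q *
        (\<Prod>\<nu>c\<in>C \<nu>. htens k C rkf ?W' None \<nu>c r' a))"
      by (rule sum.cong[OF refl]) (simp add: mask_entries_def)
    also have "\<dots> = htens (Suc k) C rkf ?W' None \<mu> q a"
      by (simp only: True htens_Suc_None[where C = C and \<mu> = \<nu>, OF assms(1)] fun_upd_same)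
    finally show ?thesis .
  qed (simp add: Suc.IH)
qed simp

section \<open>The tensor space\<close>

lemma finite_tbox: "finite (tbox N D)"
proof -
  have "tbox N D \<subseteq> {f. \<forall>n. (n \<in> {1..N} \<longrightarrow> f n \<in> (\<Union>m\<in>{1..N}. {1..D m})) \<and>
      (n \<notin> {1..N} \<longrightarrow> f n = 0)}"
    unfolding tbox_def by blast
  moreover have "finite \<dots>"
    by (rule finite_set_of_finite_funs) auto
  ultimately show ?thesis
    by (rule finite_subset)
qed

lemma lookup_to_tensor:
  "Poly_Mapping.lookup (to_tensor N D f) a = (if a \<in> tbox N D then f a else 0)"
proof -
  have "finite {a. (if a \<in> tbox N D then f a else 0) \<noteq> 0}"
    by (rule finite_subset[OF _ finite_tbox]) auto
  then show ?thesis
    by (simp add: to_tensor_def lookup_Abs_poly_mapping)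
qed

lemma to_tensor_in_tspace: "to_tensor N D f \<in> tspace N D"
  by (auto simp: tspace_def in_keys_iff lookup_to_tensor split: if_splits)

lemma lookup_scaleR_poly_mapping:
  "Poly_Mapping.lookup (c *\<^sub>R X) a = c * Poly_Mapping.lookup (X :: 'a \<Rightarrow>\<^sub>0 real) a"
proof -
  have "finite {a. c *\<^sub>R Poly_Mapping.lookup X a \<noteq> 0}"
    by (rule finite_subset[of _ "{a. Poly_Mapping.lookup X a \<noteq> 0}"]) auto
  then show ?thesis
    by (simp add: scaleR_poly_mapping_def)
qed

lemma single_eq_scaleR: "Poly_Mapping.single a s = s *\<^sub>R Poly_Mapping.single a (1::real)"
  by (rule poly_mapping_eqI) (simp add: lookup_scaleR_poly_mapping lookup_single when_def)

lemma tspace_add_scaleR: "X \<in> tspace N D \<Longrightarrow> Y \<in> tspace N D \<Longrightarrow> X + c *\<^sub>R Y \<in> tspace N D"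
  by (auto simp: tspace_def in_keys_iff lookup_add lookup_scaleR_poly_mapping subset_iff)
    (metis add_0 mult_zero_right)

lemma tspace_expansion:
  assumes "Y \<in> tspace N D"
  shows "Y = (\<Sum>a\<in>tbox N D. Poly_Mapping.lookup Y a *\<^sub>R Poly_Mapping.single a 1)"
proof (rule poly_mapping_eqI)
  fix b
  have "Poly_Mapping.lookup Y b = 0" if "b \<notin> tbox N D"
    using assms that by (auto simp: tspace_def in_keys_iff)
  then show "Poly_Mapping.lookup Y b =
      Poly_Mapping.lookup (\<Sum>a\<in>tbox N D. Poly_Mapping.lookup Y a *\<^sub>R Poly_Mapping.single a 1) b"
    by (simp add: lookup_sum lookup_scaleR_poly_mapping lookup_single when_def finite_tbox
        if_distrib[of "\<lambda>x. _ * x"] cong: if_cong)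
qed

lemma line_has_real_derivative:
  assumes "X \<in> tspace N D" "Y \<in> tspace N D" "(L has_derivative L') (at X within tspace N D)"
  shows "((\<lambda>s. L (X + (s - s0) *\<^sub>R Y)) has_real_derivative L' Y) (at s0)"
proof -
  let ?line = "\<lambda>s. X + (s - s0) *\<^sub>R Y"
  have "range ?line \<subseteq> tspace N D"
    using tspace_add_scaleR assms(1,2) by blast
  then have "(L has_derivative L') (at (?line s0) within range ?line)"
    using has_derivative_subset[OF assms(3)] by simp
  moreover have "(?line has_derivative (\<lambda>h. h *\<^sub>R Y)) (at s0)"
    by (auto intro!: derivative_eq_intros)
  ultimately have "((\<lambda>s. L (?line s)) has_derivative (\<lambda>h. L' (h *\<^sub>R Y))) (at s0)"
    using has_derivative_in_compose by blast
  moreover have "linear L'"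
    using assms(3) by (simp add: has_derivative_linear)
  ultimately show ?thesis
    by (simp add: has_derivative_imp_has_field_derivative linear_scale)
qed

lemma tinner_neg_tgrad:
  assumes "X \<in> tspace N D" "(L has_derivative L') (at X within tspace N D)" "Y \<in> tspace N D"
  shows "tinner N D (- tgrad N D L X) Y = - L' Y"
proof -
  have "linear L'"
    using assms(2) by (simp add: has_derivative_linear)
  have grad: "Poly_Mapping.lookup (tgrad N D L X) a = L' (Poly_Mapping.single a 1)" if "a \<in> tbox N D" for a
  proof -
    have "(\<lambda>s. L (X + Poly_Mapping.single a s)) = (\<lambda>s. L (X + (s - 0) *\<^sub>R Poly_Mapping.single a 1))"
      by (subst single_eq_scaleR) simp
    moreover have "((\<lambda>s. L (X + (s - 0) *\<^sub>R Poly_Mapping.single a 1)) has_real_derivative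
        L' (Poly_Mapping.single a 1)) (at 0)"
      by (rule line_has_real_derivative[OF assms(1) _ assms(2)]) (use that in \<open>simp add: tspace_def\<close>)
    ultimately have "deriv (\<lambda>s. L (X + Poly_Mapping.single a s)) 0 = L' (Poly_Mapping.single a 1)"
      by (metis DERIV_imp_deriv)
    then show ?thesis
      using that by (simp add: tgrad_def lookup_to_tensor)
  qed
  have "L' Y = (\<Sum>a\<in>tbox N D. Poly_Mapping.lookup Y a * L' (Poly_Mapping.single a 1))"
    by (subst tspace_expansion[OF assms(3)]) (simp add: linear_sum[OF \<open>linear L'\<close>] linear_scale[OF \<open>linear L'\<close>])
  then show ?thesis
    by (simp add: tinner_def grad sum_negf mult.commute)
qed

lemma lookup_end_tensor_mod:
  "Poly_Mapping.lookup (end_tensor_mod N D T C R W m) a =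
    (if a \<in> tbox N D then htens (card {1..N}) C (rk C D R) W m {1..N} 1 a else 0)"
  by (simp add: end_tensor_mod_def lookup_to_tensor del: card_atLeastAtMost)

lemma end_tensor_mod_in_tspace: "end_tensor_mod N D T C R W m \<in> tspace N D"
  by (simp add: end_tensor_mod_def to_tensor_in_tspace)

lemma end_tensor_in_tspace: "end_tensor N D T C R W \<in> tspace N D"
  by (simp add: end_tensor_def end_tensor_mod_in_tspace)

lemma end_tensor_eqI:
  assumes "\<And>a. a \<in> tbox N D \<Longrightarrow>
    htens (card {1..N}) C (rk C D R) W1 None {1..N} 1 a = htens (card {1..N}) C (rk C D R) W2 None {1..N} 1 a"
  shows "end_tensor N D T C R W1 = end_tensor N D T C R W2"
  using assms by (auto intro!: poly_mapping_eqI simp: end_tensor_def lookup_end_tensor_mod)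

lemma row_norm_squared:
  "(row_norm N T C D R W \<nu> r)\<^sup>2 = (\<Sum>(i, j)\<in>{r} \<times> {1..rkpa N T C D R \<nu>}. (W \<nu> i j)\<^sup>2)"
  by (simp add: row_norm_def sum_nonneg sum.cartesian_product[symmetric])

lemma col_norm_squared:
  "(col_norm C D R W \<nu> r)\<^sup>2 = (\<Sum>(i, j)\<in>{1..rk C D R \<nu>} \<times> {r}. (W \<nu> i j)\<^sup>2)"
  by (simp add: col_norm_def sum_nonneg sum.cartesian_product[symmetric])

section \<open>Mode trees\<close>

context
  fixes N :: nat and T :: "nat set set" and C :: "nat set \<Rightarrow> nat set set"
  assumes mt: "mode_tree N T C"
begin

lemma root_in_tree: "{1..N} \<in> T"
  using mt by (simp add: mode_tree_def)

lemma node_subset_modes: "\<nu> \<in> T \<Longrightarrow> \<nu> \<subseteq> {1..N}"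
  using mt by (simp add: mode_tree_def)

lemma children_in_tree: "\<nu> \<in> T \<Longrightarrow> C \<nu> \<subseteq> T"
  using mt by (simp add: mode_tree_def)

lemma child_psubset: "\<nu> \<in> T \<Longrightarrow> c \<in> C \<nu> \<Longrightarrow> c \<subset> \<nu>"
  using mt by (simp add: mode_tree_def)

lemma leaf_singleton: "\<nu> \<in> T \<Longrightarrow> C \<nu> = {} \<Longrightarrow> \<exists>n\<in>{1..N}. \<nu> = {n}"
proof -
  assume "\<nu> \<in> T" "C \<nu> = {}"
  then have "\<nu> \<in> {\<nu>\<in>T. C \<nu> = {}}"
    by simp
  also have "\<dots> = (\<lambda>n. {n}) ` {1..N}"
    using mt by (simp add: mode_tree_def)
  finally show ?thesis
    by blast
qed

lemma unique_parent: "\<nu> \<in> T \<Longrightarrow> \<nu> \<noteq> {1..N} \<Longrightarrow> \<exists>!p. p \<in> T \<and> \<nu> \<in> C p"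
  using mt by (simp add: mode_tree_def)

lemma finite_children: "\<nu> \<in> T \<Longrightarrow> finite (C \<nu>)"
proof -
  assume "\<nu> \<in> T"
  then have "C \<nu> \<subseteq> Pow {1..N}"
    using children_in_tree node_subset_modes by blast
  then show ?thesis
    by (rule finite_subset) simp
qed

lemma child_ne_root: "p \<in> T \<Longrightarrow> c \<in> C p \<Longrightarrow> c \<noteq> {1..N}"
  using child_psubset node_subset_modes by blast

lemma parent_child:
  assumes "p \<in> T" "c \<in> C p"
  shows "parent T C c = p"
proof -
  have "\<exists>!p. p \<in> T \<and> c \<in> C p"
    using unique_parent children_in_tree child_ne_root assms by blast
  then show ?thesis
    unfolding parent_def by (rule the1_equality) (use assms in blast)
qed

lemma rkpa_child:
  assumes "p \<in> T" "c \<in> C p"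
  shows "rkpa N T C D R c = rk C D R p"
  using child_ne_root[OF assms] parent_child[OF assms] by (simp add: rkpa_def)

lemma descendant_in_tree:
  "(\<mu>, \<nu>) \<in> (child_rel C)\<^sup>* \<Longrightarrow> \<mu> \<in> T \<Longrightarrow> \<nu> \<in> T \<and> \<nu> \<subseteq> \<mu>"
proof (induction rule: rtrancl_induct)
  case (step \<nu> \<nu>')
  then have "\<nu>' \<in> C \<nu>" "\<nu> \<in> T" "\<nu> \<subseteq> \<mu>"
    by (auto simp: child_rel_def)
  then show ?case
    using children_in_tree child_psubset by blast
qed simp

lemma root_reaches: "\<nu> \<in> T \<Longrightarrow> ({1..N}, \<nu>) \<in> (child_rel C)\<^sup>*"
proof (induction "card {1..N} - card \<nu>" arbitrary: \<nu> rule: less_induct)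
  case less
  show ?case
  proof (cases "\<nu> = {1..N}")
    case False
    then obtain p where p: "p \<in> T" "\<nu> \<in> C p"
      using unique_parent less.prems by blast
    have "card \<nu> < card p"
      using child_psubset[OF p] node_subset_modes[OF p(1)]
      by (meson finite_atLeastAtMost finite_subset psubset_card_mono)
    moreover have "card p \<le> card {1..N}"
      using node_subset_modes[OF p(1)] by (intro card_mono) simp_all
    ultimately have "({1..N}, p) \<in> (child_rel C)\<^sup>*"
      using less.hyps p(1) by simp
    then show ?thesis
      using p(2) by (meson child_relI rtrancl.rtrancl_into_rtrancl)
  qed simp
qed

lemma child_not_ancestor:
  assumes "p \<in> T" "c \<in> C p"
  shows "(c, p) \<notin> (child_rel C)\<^sup>*"
proof
  assume "(c, p) \<in> (child_rel C)\<^sup>*"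
  then have "p \<subseteq> c"
    using descendant_in_tree children_in_tree assms by blast
  then show False
    using child_psubset[OF assms] by blast
qed

lemma child_rel_last_step:
  "(x, y) \<in> (child_rel C)\<^sup>* \<Longrightarrow> x \<noteq> y \<Longrightarrow> \<exists>p. (x, p) \<in> (child_rel C)\<^sup>* \<and> y \<in> C p"
  by (erule rtranclE) (auto simp: child_rel_def)

lemma ancestors_comparable:
  assumes "(x, z) \<in> (child_rel C)\<^sup>*" "x \<in> T" "(y, z) \<in> (child_rel C)\<^sup>*" "y \<in> T"
  shows "(x, y) \<in> (child_rel C)\<^sup>* \<or> (y, x) \<in> (child_rel C)\<^sup>*"
  using assms
proof (induction arbitrary: y rule: rtrancl_induct)
  case (step z' z)
  show ?case
  proof (cases "y = z")
    case True
    then show ?thesis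
      using step.hyps by (simp add: rtrancl.rtrancl_into_rtrancl)
  next
    case False
    then obtain p where p: "(y, p) \<in> (child_rel C)\<^sup>*" "z \<in> C p"
      using child_rel_last_step step.prems(2) by blast
    have "z' \<in> T"
      using descendant_in_tree[OF step.hyps(1) step.prems(1)] by blast
    moreover have "z \<in> C z'"
      using step.hyps(2) by (simp add: child_rel_def)
    moreover have "p \<in> T"
      using descendant_in_tree[OF p(1) step.prems(3)] by blast
    ultimately have "p = z'"
      using parent_child p(2) by metis
    then show ?thesis
      using step.IH[OF step.prems(1) _ step.prems(3)] p(1) by blast
  qed
qed simp

lemma sibling_subtrees_disjoint:
  assumes "\<mu> \<in> T" "c1 \<in> C \<mu>" "c2 \<in> C \<mu>"
    and "(c1, z) \<in> (child_rel C)\<^sup>*" "(c2, z) \<in> (child_rel C)\<^sup>*"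
  shows "c1 = c2"
proof -
  have sibling_not_below: "x = y"
    if x: "x \<in> C \<mu>" and y: "y \<in> C \<mu>" and xy: "(x, y) \<in> (child_rel C)\<^sup>*" for x y
  proof (rule ccontr)
    assume "x \<noteq> y"
    then obtain p where p: "(x, p) \<in> (child_rel C)\<^sup>*" "y \<in> C p"
      using child_rel_last_step xy by blast
    have "x \<in> T"
      using x assms(1) children_in_tree by blast
    then have "p \<in> T"
      using descendant_in_tree[OF p(1)] by blast
    then have "p = \<mu>"
      using parent_child[OF _ p(2)] parent_child[OF assms(1) y] by simp
    then show False
      using p(1) x assms(1) child_not_ancestor by blast
  qed
  have "c1 \<in> T" "c2 \<in> T"
    using assms children_in_tree by blast+
  then have "(c1, c2) \<in> (child_rel C)\<^sup>* \<or> (c2, c1) \<in> (child_rel C)\<^sup>*"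
    using ancestors_comparable[OF assms(4) _ assms(5)] by blast
  then show ?thesis
    using sibling_not_below assms(2,3) by auto
qed

subsection \<open>Multilinearity and locality of the end tensor\<close>

lemma htens_update_parent:
  assumes "p \<in> T" "c \<in> C p"
  shows "htens k C rkf (W(p := M)) m c q a = htens k C rkf W m c q a"
  by (rule htens_cong_subtree) (use child_not_ancestor[OF assms] in auto)

lemma htens_update_sibling:
  assumes "p \<in> T" "c \<in> C p" "c' \<in> C p" "c' \<noteq> c"
  shows "htens k C rkf (W(c := M)) m c' q a = htens k C rkf W m c' q a"
  by (rule htens_cong_subtree) (use sibling_subtrees_disjoint[OF assms(1,2,3)] assms(4) in auto)

lemma htens_update_linear:
  assumes "\<nu> \<in> T" "\<mu> \<in> T" "(\<mu>, \<nu>) \<in> (child_rel C)\<^sup>*"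
  shows "htens k C rkf (W(\<nu> := \<lambda>i j. c * M1 i j + M2 i j)) None \<mu> q a =
    c * htens k C rkf (W(\<nu> := M1)) None \<mu> q a + htens k C rkf (W(\<nu> := M2)) None \<mu> q a"
  using assms(2,3)
proof (induction k arbitrary: \<mu> q)
  case (Suc k)
  show ?case
  proof (cases "\<mu> = \<nu>")
    case True
    have children: "htens k C rkf (W(\<nu> := M)) None c r' a = htens k C rkf W None c r' a"
      if "c \<in> C \<nu>" for M c r'
      using htens_update_parent[OF assms(1) that] .
    show ?thesis
    proof (cases "C \<nu> = {}")
      case False
      show ?thesis
        unfolding True htens_Suc_None[where C = C and \<mu> = \<nu>, OF False]
        by (simp add: children sum.distrib sum_distrib_left algebra_simps cong: prod.cong)
    qed (simp add: True)
  next
    case False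
    then obtain c0 where c0: "c0 \<in> C \<mu>" "(c0, \<nu>) \<in> (child_rel C)\<^sup>*"
      using Suc.prems(2) by (auto elim: converse_rtranclE simp: child_rel_def)
    then have "c0 \<in> T" "C \<mu> \<noteq> {}"
      using children_in_tree Suc.prems(1) by blast+
    have other_children: "htens k C rkf (W(\<nu> := M)) None c r' a = htens k C rkf W None c r' a"
      if "c \<in> C \<mu> - {c0}" for M c r'
    proof (rule htens_cong_subtree)
      fix \<mu>' assume "(c, \<mu>') \<in> (child_rel C)\<^sup>*"
      then show "(W(\<nu> := M)) \<mu>' = W \<mu>'"
        using sibling_subtrees_disjoint[OF Suc.prems(1) c0(1), of c \<nu>] c0(2) that by auto
    qed
    have product_split: "(\<Prod>c\<in>C \<mu>. htens k C rkf (W(\<nu> := M)) None c r' a) =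
        htens k C rkf (W(\<nu> := M)) None c0 r' a * (\<Prod>c\<in>C \<mu> - {c0}. htens k C rkf W None c r' a)"
      for M r'
      using finite_children[OF Suc.prems(1)] c0(1) other_children by (rule prod_remove_cong)
    have "(W(\<nu> := M)) \<mu> = W \<mu>" for M
      using False by simp
    then show ?thesis
      unfolding htens_Suc_None[where C = C and \<mu> = \<mu>, OF \<open>C \<mu> \<noteq> {}\<close>] product_split
        Suc.IH[OF \<open>c0 \<in> T\<close> c0(2)]
      by (simp add: sum.distrib sum_distrib_left algebra_simps)
  qed
qed simp

lemma htens_mask_columns:
  assumes "\<nu> \<in> T" "q \<in> J"
  shows "htens k C rkf (W(\<nu> := mask_entries M (A \<times> J))) None \<nu> q a =
    htens k C rkf (W(\<nu> := mask_entries M (A \<times> UNIV))) None \<nu> q a"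
proof (cases k)
  case (Suc k')
  then show ?thesis
    using assms(2) by (simp add: mask_entries_def htens_update_parent[OF assms(1)])
qed simp

lemma htens_mask_column:
  assumes "c \<in> T" "a \<in> tbox N D"
  shows "htens k C (rk C D R) (W(c := mask_entries (W c) ({1..rk C D R c} \<times> {r}))) None c q a =
    (if q = r then htens k C (rk C D R) W None c r a else 0)"
proof (cases k)
  case (Suc k')
  show ?thesis
  proof (cases "C c = {}")
    case True
    then obtain n where n: "n \<in> {1..N}" "c = {n}"
      using leaf_singleton assms(1) by blast
    then have "a n \<in> {1..D n}"
      using assms(2) unfolding tbox_def by blast
    then show ?thesis
      using True n Suc by (simp add: rk_def mask_entries_def)
  next
    case False
    then show ?thesis
      unfolding Suc htens_Suc_None[where C = C and \<mu> = c, OF False]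
      by (auto simp: mask_entries_def htens_update_parent[OF assms(1)] intro!: sum.cong)
  qed
qed simp

lemma htens_column_to_row:
  assumes "\<nu> \<in> T" "c \<in> C \<nu>" "r \<in> {1..rk C D R \<nu>}" "a \<in> tbox N D"
  shows "htens k C (rk C D R) (W(c := mask_entries (W c) ({1..rk C D R c} \<times> {r}))) None \<nu> q a =
    htens k C (rk C D R) (W(\<nu> := mask_entries (W \<nu>) ({r} \<times> UNIV))) None \<nu> q a"
proof (cases k)
  case (Suc k')
  let ?h = "\<lambda>W c r'. htens k' C (rk C D R) W None c r' a"
  let ?Wc = "W(c := mask_entries (W c) ({1..rk C D R c} \<times> {r}))"
  have "c \<in> T" "c \<noteq> \<nu>" "C \<nu> \<noteq> {}"
    using assms(1,2) children_in_tree child_psubset by blast+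
  have fin: "finite (C \<nu>)"
    using finite_children[OF assms(1)] .
  have "(\<Prod>c'\<in>C \<nu>. ?h ?Wc c' r') = ?h ?Wc c r' * (\<Prod>c'\<in>C \<nu> - {c}. ?h W c' r')" for r'
    using fin assms(2) htens_update_sibling[OF assms(1,2)] by (rule prod_remove_cong) auto
  also have "\<dots> r' = (if r' = r then (\<Prod>c'\<in>C \<nu>. ?h W c' r') else 0)" for r'
    using htens_mask_column[OF \<open>c \<in> T\<close> assms(4)] by (simp add: prod.remove[OF fin assms(2)])
  finally have column: "(\<Prod>c'\<in>C \<nu>. ?h ?Wc c' r') = (if r' = r then (\<Prod>c'\<in>C \<nu>. ?h W c' r') else 0)"
    for r' .
  show ?thesis
    unfolding Suc htens_Suc_None[where C = C and \<mu> = \<nu>, OF \<open>C \<nu> \<noteq> {}\<close>] column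
    using assms(3) \<open>c \<noteq> \<nu>\<close>
    by (simp add: mask_entries_def htens_update_parent[OF assms(1)] if_distrib[of "\<lambda>x. _ * x"]
        if_distrib[of "\<lambda>x. x * _"] cong: if_cong)
qed simp

lemma htens_eq_off_subtree:
  assumes "\<nu> \<in> T" "\<And>\<mu>. (\<nu>, \<mu>) \<notin> (child_rel C)\<^sup>* \<Longrightarrow> W1 \<mu> = W2 \<mu>"
    and "\<And>k q. q \<in> {1..rkpa N T C D R \<nu>} \<Longrightarrow>
      htens k C (rk C D R) W1 None \<nu> q a = htens k C (rk C D R) W2 None \<nu> q a"
  shows "\<mu> \<in> T \<Longrightarrow> (\<nu>, \<mu>) \<notin> (child_rel C)\<^sup>* \<Longrightarrow>
    htens k C (rk C D R) W1 None \<mu> q a = htens k C (rk C D R) W2 None \<mu> q a"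
proof (induction k arbitrary: \<mu> q)
  case (Suc k)
  have children: "htens k C (rk C D R) W1 None c r' a = htens k C (rk C D R) W2 None c r' a"
    if c: "c \<in> C \<mu>" and r': "r' \<in> {1..rk C D R \<mu>}" for c r'
  proof (cases "c = \<nu>")
    case True
    then show ?thesis
      using assms(3) rkpa_child[OF Suc.prems(1) c] r' by simp
  next
    case False
    have "(\<nu>, c) \<notin> (child_rel C)\<^sup>*"
    proof
      assume "(\<nu>, c) \<in> (child_rel C)\<^sup>*"
      then obtain p where p: "(\<nu>, p) \<in> (child_rel C)\<^sup>*" "c \<in> C p"
        using child_rel_last_step False by blast
      then have "p \<in> T"
        using descendant_in_tree assms(1) by blast
      then have "p = \<mu>"
        using parent_child[OF _ p(2)] parent_child[OF Suc.prems(1) c] by simp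
      then show False
        using p(1) Suc.prems(2) by blast
    qed
    then show ?thesis
      using Suc.IH children_in_tree Suc.prems(1) c by blast
  qed
  have "W1 \<mu> = W2 \<mu>"
    using assms(2) Suc.prems(2) .
  moreover have "(\<Prod>c\<in>C \<mu>. htens k C (rk C D R) W1 None c r' a) = (\<Prod>c\<in>C \<mu>. htens k C (rk C D R) W2 None c r' a)"
    if "r' \<in> {1..rk C D R \<mu>}" for r'
    by (rule prod.cong[OF refl]) (rule children[OF _ that])
  ultimately show ?case
    by (cases "C \<mu> = {}") (auto intro: sum.cong)
qed simp

lemma end_tensor_eq_off_subtree:
  assumes "\<nu> \<in> T" "\<And>\<mu>. (\<nu>, \<mu>) \<notin> (child_rel C)\<^sup>* \<Longrightarrow> W1 \<mu> = W2 \<mu>"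
    and "\<And>k q a. q \<in> {1..rkpa N T C D R \<nu>} \<Longrightarrow> a \<in> tbox N D \<Longrightarrow>
      htens k C (rk C D R) W1 None \<nu> q a = htens k C (rk C D R) W2 None \<nu> q a"
  shows "end_tensor N D T C R W1 = end_tensor N D T C R W2"
proof (rule end_tensor_eqI)
  fix a assume a: "a \<in> tbox N D"
  show "htens (card {1..N}) C (rk C D R) W1 None {1..N} 1 a =
      htens (card {1..N}) C (rk C D R) W2 None {1..N} 1 a"
  proof (cases "\<nu> = {1..N}")
    case True
    then show ?thesis
      using assms(3)[of 1 a] a by (simp add: rkpa_def)
  next
    case False
    then have "(\<nu>, {1..N}) \<notin> (child_rel C)\<^sup>*"
      using descendant_in_tree assms(1) node_subset_modes by blast
    then show ?thesis
      using htens_eq_off_subtree[OF assms(1,2) assms(3)[OF _ a] root_in_tree] by blast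
  qed
qed

lemma end_tensor_update_linear:
  assumes "\<nu> \<in> T"
  shows "end_tensor N D T C R (W(\<nu> := \<lambda>i j. c * M1 i j + M2 i j)) =
    c *\<^sub>R end_tensor N D T C R (W(\<nu> := M1)) + end_tensor N D T C R (W(\<nu> := M2))"
  by (rule poly_mapping_eqI)
    (simp only: end_tensor_def lookup_end_tensor_mod lookup_add lookup_scaleR_poly_mapping
      htens_update_linear[OF assms root_in_tree root_reaches[OF assms]], simp)

lemma end_tensor_update_zero:
  assumes "\<nu> \<in> T"
  shows "end_tensor N D T C R (W(\<nu> := \<lambda>i j. 0)) = 0"
  using end_tensor_update_linear[OF assms, of D R W 1 "\<lambda>i j. 0" "\<lambda>i j. 0"] by simp

lemma end_tensor_update_scale:
  assumes "\<nu> \<in> T"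
  shows "end_tensor N D T C R (W(\<nu> := \<lambda>i j. c * M i j)) = c *\<^sub>R end_tensor N D T C R (W(\<nu> := M))"
  using end_tensor_update_linear[OF assms, of D R W c M "\<lambda>i j. 0"]
  by (simp only: add_0_right end_tensor_update_zero[OF assms])

lemma end_tensor_mod_Some:
  assumes "\<nu> \<in> T" "C \<nu> \<noteq> {}" "r \<in> {1..rk C D R \<nu>}"
  shows "end_tensor_mod N D T C R W (Some (\<nu>, r, c)) =
    c *\<^sub>R end_tensor N D T C R (W(\<nu> := mask_entries (W \<nu>) ({r} \<times> UNIV)))"
proof -
  have "end_tensor_mod N D T C R W (Some (\<nu>, r, c)) =
      end_tensor N D T C R (W(\<nu> := \<lambda>i j. c * mask_entries (W \<nu>) ({r} \<times> UNIV) i j))"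
    unfolding end_tensor_def end_tensor_mod_def
      htens_Some_eq_None[where C = C and rkf = "rk C D R", OF assms(2,3)] ..
  also have "\<dots> = c *\<^sub>R end_tensor N D T C R (W(\<nu> := mask_entries (W \<nu>) ({r} \<times> UNIV)))"
    by (rule end_tensor_update_scale[OF assms(1)])
  finally show ?thesis .
qed

lemma end_tensor_update_sum:
  assumes "\<nu> \<in> T" "finite S"
  shows "end_tensor N D T C R (W(\<nu> := \<lambda>i j. \<Sum>s\<in>S. c s * M s i j)) =
    (\<Sum>s\<in>S. c s *\<^sub>R end_tensor N D T C R (W(\<nu> := M s)))"
  using assms(2)
proof (induction S rule: finite_induct)
  case empty
  show ?case
    by (simp only: sum.empty end_tensor_update_zero[OF assms(1)])
next
  case (insert s S)
  have "end_tensor N D T C R (W(\<nu> := \<lambda>i j. \<Sum>s\<in>insert s S. c s * M s i j)) =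
      end_tensor N D T C R (W(\<nu> := \<lambda>i j. c s * M s i j + (\<Sum>s\<in>S. c s * M s i j)))"
    by (simp only: sum.insert[OF insert.hyps])
  also have "\<dots> = c s *\<^sub>R end_tensor N D T C R (W(\<nu> := M s)) +
      end_tensor N D T C R (W(\<nu> := \<lambda>i j. \<Sum>s\<in>S. c s * M s i j))"
    by (rule end_tensor_update_linear[OF assms(1)])
  finally show ?case
    by (simp only: insert.IH sum.insert[OF insert.hyps])
qed

lemma end_tensor_mask_columns:
  assumes "\<nu> \<in> T"
  shows "end_tensor N D T C R (W(\<nu> := mask_entries M (A \<times> {1..rkpa N T C D R \<nu>}))) =
    end_tensor N D T C R (W(\<nu> := mask_entries M (A \<times> UNIV)))"
  by (rule end_tensor_eq_off_subtree[OF assms]) (auto intro: htens_mask_columns[OF assms])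

lemma end_tensor_column_to_row:
  assumes "\<nu> \<in> T" "c \<in> C \<nu>" "r \<in> {1..rk C D R \<nu>}"
  shows "end_tensor N D T C R (W(c := mask_entries (W c) ({1..rk C D R c} \<times> {r}))) =
    end_tensor N D T C R (W(\<nu> := mask_entries (W \<nu>) ({r} \<times> UNIV)))"
proof (rule end_tensor_eq_off_subtree[OF assms(1)])
  fix \<mu> assume "(\<nu>, \<mu>) \<notin> (child_rel C)\<^sup>*"
  moreover have "(\<nu>, c) \<in> (child_rel C)\<^sup>*"
    using assms(2) by (simp add: child_relI r_into_rtrancl)
  ultimately show "(W(c := mask_entries (W c) ({1..rk C D R c} \<times> {r}))) \<mu> =
      (W(\<nu> := mask_entries (W \<nu>) ({r} \<times> UNIV))) \<mu>"
    by auto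
qed (rule htens_column_to_row[OF assms])

lemma end_tensor_mask_row_eq_zero:
  assumes "\<nu> \<in> T" "r \<in> {1..rk C D R \<nu>}" "sigma N T C D R W \<nu> r = 0"
  shows "end_tensor N D T C R (W(\<nu> := mask_entries (W \<nu>) ({r} \<times> UNIV))) = 0"
proof -
  have "row_norm N T C D R W \<nu> r = 0 \<or> (\<exists>c\<in>C \<nu>. col_norm C D R W c r = 0)"
    using assms(3) finite_children[OF assms(1)] by (simp add: sigma_def)
  then show ?thesis
  proof
    assume "row_norm N T C D R W \<nu> r = 0"
    then have "mask_entries (W \<nu>) ({r} \<times> {1..rkpa N T C D R \<nu>}) = (\<lambda>i j. 0)"
      by (auto simp: row_norm_def mask_entries_def sum_nonneg_eq_0_iff fun_eq_iff)
    then show ?thesis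
      using end_tensor_mask_columns[OF assms(1), of D R W "W \<nu>" "{r}"] end_tensor_update_zero[OF assms(1)]
      by metis
  next
    assume "\<exists>c\<in>C \<nu>. col_norm C D R W c r = 0"
    then obtain c where c: "c \<in> C \<nu>" "col_norm C D R W c r = 0"
      by blast
    then have "mask_entries (W c) ({1..rk C D R c} \<times> {r}) = (\<lambda>i j. 0)"
      by (auto simp: col_norm_def mask_entries_def sum_nonneg_eq_0_iff fun_eq_iff)
    moreover have "c \<in> T"
      using c(1) assms(1) children_in_tree by blast
    ultimately show ?thesis
      using end_tensor_column_to_row[OF assms(1) c(1) assms(2), of W] end_tensor_update_zero by metis
  qed
qed

lemma sigma_scaleR_E_tensor:
  assumes "\<nu> \<in> T" "C \<nu> \<noteq> {}" "r \<in> {1..rk C D R \<nu>}"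
  shows "sigma N T C D R W \<nu> r *\<^sub>R E_tensor N D T C R W \<nu> r =
    end_tensor N D T C R (W(\<nu> := mask_entries (W \<nu>) ({r} \<times> UNIV)))"
proof (cases "sigma N T C D R W \<nu> r = 0")
  case True
  then show ?thesis
    using end_tensor_mask_row_eq_zero[OF assms(1,3) True] by (metis scale_zero_left)
next
  case False
  then show ?thesis
    by (simp add: E_tensor_def end_tensor_mod_Some[OF assms])
qed

subsection \<open>Gradient flow\<close>

lemma partial_phi_eq:
  assumes "\<mu> \<in> T" "(L has_derivative L') (at (end_tensor N D T C R W) within tspace N D)"
  shows "partial_phi N D T C R L W \<mu> i j = L' (end_tensor N D T C R (W(\<mu> := matrix_unit i j)))"
proof -
  let ?X = "end_tensor N D T C R W"
  let ?G = "end_tensor N D T C R (W(\<mu> := matrix_unit i j))"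
  have "upd_w W \<mu> i j s = W(\<mu> := \<lambda>i' j'. (s - W \<mu> i j) * matrix_unit i j i' j' + W \<mu> i' j')" for s
    by (auto simp: upd_w_def matrix_unit_def fun_eq_iff)
  then have "phiH N D T C R L (upd_w W \<mu> i j s) = L (?X + (s - W \<mu> i j) *\<^sub>R ?G)" for s
    by (simp only: phiH_def end_tensor_update_linear[OF assms(1)] fun_upd_triv) (simp only: add.commute)
  moreover have "((\<lambda>s. L (?X + (s - W \<mu> i j) *\<^sub>R ?G)) has_real_derivative L' ?G) (at (W \<mu> i j))"
    using line_has_real_derivative[OF _ _ assms(2)] by (simp add: end_tensor_def end_tensor_mod_in_tspace)
  ultimately show ?thesis
    unfolding partial_phi_def by (simp add: DERIV_imp_deriv)
qed

lemma grad_flow_sum_squares: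
  assumes "grad_flow N D T C R L Wt" "t \<ge> 0" "\<mu> \<in> T"
    and "S \<subseteq> {1..rk C D R \<mu>} \<times> {1..rkpa N T C D R \<mu>}"
    and "(L has_derivative L') (at (end_tensor N D T C R (Wt t)) within tspace N D)"
  shows "((\<lambda>\<tau>. \<Sum>(i, j)\<in>S. (Wt \<tau> \<mu> i j)\<^sup>2) has_real_derivative
      - 2 * L' (end_tensor N D T C R ((Wt t)(\<mu> := mask_entries (Wt t \<mu>) S)))) (at t within {0..})"
proof -
  define W where "W = Wt t"
  define G where "G i j = end_tensor N D T C R (W(\<mu> := matrix_unit i j))" for i j
  have "finite S"
    using assms(4) finite_subset by blast
  have "linear L'"
    using assms(5) by (simp add: has_derivative_linear)
  have entry: "((\<lambda>\<tau>. Wt \<tau> \<mu> i j) has_real_derivative - L' (G i j)) (at t within {0..})"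
    if "(i, j) \<in> S" for i j
  proof -
    have "i \<in> {1..rk C D R \<mu>}" "j \<in> {1..rkpa N T C D R \<mu>}"
      using assms(4) that by auto
    then have "((\<lambda>\<tau>. Wt \<tau> \<mu> i j) has_real_derivative - partial_phi N D T C R L W \<mu> i j) (at t within {0..})"
      using assms(1-3) unfolding grad_flow_def W_def by blast
    then show ?thesis
      unfolding partial_phi_eq[OF assms(3) assms(5)[folded W_def]] G_def .
  qed
  have "((\<lambda>\<tau>. \<Sum>(i, j)\<in>S. (Wt \<tau> \<mu> i j)\<^sup>2) has_real_derivative
      (\<Sum>(i, j)\<in>S. 2 * W \<mu> i j * - L' (G i j))) (at t within {0..})"
    unfolding W_def by (rule DERIV_sum) (auto intro!: derivative_eq_intros entry)
  also have "(\<Sum>(i, j)\<in>S. 2 * W \<mu> i j * - L' (G i j)) = - 2 * L' (\<Sum>(i, j)\<in>S. W \<mu> i j *\<^sub>R G i j)"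
    by (simp add: linear_sum[OF \<open>linear L'\<close>] linear_scale[OF \<open>linear L'\<close>] sum_distrib_left
        case_prod_beta sum_negf mult.assoc)
  also have "(\<Sum>(i, j)\<in>S. W \<mu> i j *\<^sub>R G i j) = end_tensor N D T C R (W(\<mu> := mask_entries (W \<mu>) S))"
  proof -
    have "mask_entries (W \<mu>) S =
        (\<lambda>i' j'. \<Sum>s\<in>S. W \<mu> (fst s) (snd s) * matrix_unit (fst s) (snd s) i' j')"
      using \<open>finite S\<close> by (auto simp: mask_entries_def matrix_unit_def fun_eq_iff if_distrib[of "\<lambda>x. _ * x"]
          sum.delta' cong: if_cong)
    then show ?thesis
      using end_tensor_update_sum[OF assms(3) \<open>finite S\<close>, of D R W "\<lambda>s. W \<mu> (fst s) (snd s)"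
          "\<lambda>s. matrix_unit (fst s) (snd s)"]
      by (simp add: G_def case_prod_beta)
  qed
  finally show ?thesis
    unfolding W_def .
qed

lemma sigma_tinner_E_tensor:
  assumes "\<nu> \<in> T" "C \<nu> \<noteq> {}" "r \<in> {1..rk C D R \<nu>}"
    and "(L has_derivative L') (at (end_tensor N D T C R W) within tspace N D)"
  shows "sigma N T C D R W \<nu> r * tinner N D (- tgrad N D L (end_tensor N D T C R W)) (E_tensor N D T C R W \<nu> r) =
    - L' (end_tensor N D T C R (W(\<nu> := mask_entries (W \<nu>) ({r} \<times> UNIV))))"
proof -
  have "E_tensor N D T C R W \<nu> r \<in> tspace N D"
    using end_tensor_mod_in_tspace by (auto simp: E_tensor_def Let_def tspace_def)
  then have "sigma N T C D R W \<nu> r * tinner N D (- tgrad N D L (end_tensor N D T C R W)) (E_tensor N D T C R W \<nu> r) =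
      - (sigma N T C D R W \<nu> r * L' (E_tensor N D T C R W \<nu> r))"
    using tinner_neg_tgrad[OF end_tensor_in_tspace assms(4)] by simp
  also have "sigma N T C D R W \<nu> r * L' (E_tensor N D T C R W \<nu> r) =
      L' (sigma N T C D R W \<nu> r *\<^sub>R E_tensor N D T C R W \<nu> r)"
    using assms(4) by (simp add: has_derivative_linear linear_scale)
  finally show ?thesis
    unfolding sigma_scaleR_E_tensor[OF assms(1-3)] .
qed

end

theorem lemma13:
  fixes N :: nat and D :: "nat \<Rightarrow> nat" and T :: "nat set set"
    and C :: "nat set \<Rightarrow> nat set set" and R :: "nat set \<Rightarrow> nat"
    and L :: "((nat \<Rightarrow> nat) \<Rightarrow>\<^sub>0 real) \<Rightarrow> real"
    and Wt :: "real \<Rightarrow> nat set \<Rightarrow> nat \<Rightarrow> nat \<Rightarrow> real"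
  assumes "N \<ge> 1"
    and "\<forall>n\<in>{1..N}. D n \<ge> 1"
    and "mode_tree N T C"
    and "\<forall>\<nu>\<in>interior T C. R \<nu> \<ge> 1"
    and "loss_ok N D L"
    and "grad_flow N D T C R L Wt"
    and "\<nu> \<in> interior T C" and "\<nu>c \<in> C \<nu>" and "r \<in> {1..R \<nu>}"
    and "t \<ge> 0"
  shows "((\<lambda>\<tau>. (row_norm N T C D R (Wt \<tau>) \<nu> r)\<^sup>2) has_real_derivative
            2 * sigma N T C D R (Wt t) \<nu> r *
              tinner N D (- tgrad N D L (end_tensor N D T C R (Wt t))) (E_tensor N D T C R (Wt t) \<nu> r))
           (at t within {0..})
       \<and> ((\<lambda>\<tau>. (col_norm C D R (Wt \<tau>) \<nu>c r)\<^sup>2) has_real_derivative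
            2 * sigma N T C D R (Wt t) \<nu> r *
              tinner N D (- tgrad N D L (end_tensor N D T C R (Wt t))) (E_tensor N D T C R (Wt t) \<nu> r))
           (at t within {0..})"
proof -
  have \<nu>: "\<nu> \<in> T" "C \<nu> \<noteq> {}" "r \<in> {1..rk C D R \<nu>}"
    using assms(7,9) by (auto simp: interior_def rk_def)
  have \<nu>c: "\<nu>c \<in> T" "r \<in> {1..rkpa N T C D R \<nu>c}"
    using children_in_tree[OF assms(3) \<nu>(1)] rkpa_child[OF assms(3) \<nu>(1) assms(8)] assms(8) \<nu>(3) by auto
  obtain L' where L': "(L has_derivative L') (at (end_tensor N D T C R (Wt t)) within tspace N D)"
    using assms(5) end_tensor_in_tspace by (fastforce simp: loss_ok_def differentiable_def)
  let ?Y = "end_tensor N D T C R ((Wt t)(\<nu> := mask_entries (Wt t \<nu>) ({r} \<times> UNIV)))"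
  have "{r} \<times> {1..rkpa N T C D R \<nu>} \<subseteq> {1..rk C D R \<nu>} \<times> {1..rkpa N T C D R \<nu>}"
    using \<nu>(3) by blast
  from grad_flow_sum_squares[OF assms(3,6,10) \<nu>(1) this L']
  have row: "((\<lambda>\<tau>. (row_norm N T C D R (Wt \<tau>) \<nu> r)\<^sup>2) has_real_derivative - 2 * L' ?Y) (at t within {0..})"
    unfolding row_norm_squared end_tensor_mask_columns[OF assms(3) \<nu>(1)] .
  have "{1..rk C D R \<nu>c} \<times> {r} \<subseteq> {1..rk C D R \<nu>c} \<times> {1..rkpa N T C D R \<nu>c}"
    using \<nu>c(2) by blast
  from grad_flow_sum_squares[OF assms(3,6,10) \<nu>c(1) this L']
  have col: "((\<lambda>\<tau>. (col_norm C D R (Wt \<tau>) \<nu>c r)\<^sup>2) has_real_derivative - 2 * L' ?Y) (at t within {0..})"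
    unfolding col_norm_squared end_tensor_column_to_row[OF assms(3) \<nu>(1) assms(8) \<nu>(3)] .
  have inner: "2 * sigma N T C D R (Wt t) \<nu> r *
      tinner N D (- tgrad N D L (end_tensor N D T C R (Wt t))) (E_tensor N D T C R (Wt t) \<nu> r) = - 2 * L' ?Y"
    using sigma_tinner_E_tensor[OF assms(3) \<nu> L'] by (simp add: mult.assoc)
  show ?thesis
    unfolding inner using row col ..
qed

end
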